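(* Let $(M,g)$ be a hyperkähler K3 surface with complex structures $I,J,K=IJ$ and Kähler forms $\omega_I,\omega_J,\omega_K$. Assume: - $Y=(M,J)$ is an elliptic K3 surface $\pi:Y\to\mathbb P^1$ with a section $\sigma_0$ and fibre class $f$; - the holomorphic two-form of $Y$ is $\sigma_J=\omega_K+i\omega_I$. Let $X=(M,I)$ with $\sigma_I=\omega_J+i\omega_K$. Let $U'\subset\Gamma=H^2(M,\mathbb Z)$ be the hyperbolic plane with basis $v=f$, $v^*=f+[\sigma_0]$, identified with $U$ via $v\mapsto w$, $v^*\mapsto w^*$, and let $\Gamma'=U'^\perp$, so $\Gamma=\Gamma'\oplus U'$. Put $\mathrm{vol}(f)=\langle\omega_J,f\rangle$. Then the $\tilde\xi$-mirror of $(X,\omega_I,B=0)$ is given by $$\tilde\xi(\gamma((P_{\sigma_I},\omega_I),0))=\gamma((P_{\sigma^\vee},\omega^\vee),B^\vee)$$ for some $B^\vee\in\Gamma_{\mathbb R}$, where $$\sigma^\vee=\frac{1}{\mathrm{vol}(f)}\Big(\tfrac{\omega_I^2}{2}f+[\sigma_0]+f+i\omega_I\Big),\qquad \omega^\vee=\frac{1}{\mathrm{vol}(f)}\mathrm{Im}(\sigma_I).$$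
   Context: For a hyperkähler metric, $\omega_\lambda=g(\lambda(\cdot),\cdot)$. The form $\langle\ ,\ \rangle$ on $\Gamma=H^2(M,\mathbb Z)$ is the intersection form, extended complex-bilinearly. $U$ is the hyperbolic plane with standard basis $(w,w^* )$ ($w^2={w^*}^2=0$, $\langle w,w^*\rangle=1$). $P_\sigma$ is the oriented plane spanned by $\mathrm{Re}\,\sigma,\mathrm{Im}\,\sigma$. $\gamma$ sends $((P,\omega),B)$ to $(H_1,H_2)$ with: - $H_1=\{x-\langle x,B\rangle w:x\in P\}$, oriented via $P$; - $H_2$ with ordered basis $\big(\tfrac12(\omega^2-B^2)w+w^*+B,\ \omega-\langle\omega,B\rangle w\big)$. $\xi\in \mathrm O(\Gamma\oplus U)$ is the identity on $\Gamma'$ and swaps $v\leftrightarrow w$, $v^*\leftrightarrow w^*$. $\iota(H_1,H_2)=(H_2,H_1)$, and $\tilde\xi=\iota\circ\xi$. *)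

theory Defs
  imports "HOL-Analysis.Analysis"
begin

text \<open>Real cohomology Gamma_R is modelled by a real vector space 'v with a symmetric
bilinear (intersection) form b.  (Gamma + U)_R is modelled as 'v \<times> real \<times> real,
where (x, s, t) stands for x + s w + t w*.\<close>

definition sym_bilinear :: "('v::real_vector \<Rightarrow> 'v \<Rightarrow> real) \<Rightarrow> bool" where
  "sym_bilinear b \<longleftrightarrow> (\<forall>x y. b x y = b y x) \<and> (\<forall>y. linear (\<lambda>x. b x y))"

text \<open>Oriented planes are represented by ordered bases; two ordered bases represent the
same oriented plane iff the first is linearly independent and the second is obtained from
it by a change of basis of positive determinant.\<close>

definition oplane_eq :: "('a::real_vector \<times> 'a) \<Rightarrow> ('a \<times> 'a) \<Rightarrow> bool" where
  "oplane_eq P Q \<longleftrightarrow>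
     (\<forall>s t. s *\<^sub>R fst P + t *\<^sub>R snd P = 0 \<longrightarrow> s = 0 \<and> t = 0) \<and>
     (\<exists>p q r s. fst Q = p *\<^sub>R fst P + q *\<^sub>R snd P \<and>
                snd Q = r *\<^sub>R fst P + s *\<^sub>R snd P \<and> p * s - q * r > 0)"

definition opair_eq where
  "opair_eq H K \<longleftrightarrow> oplane_eq (fst H) (fst K) \<and> oplane_eq (snd H) (snd K)"

text \<open>P_sigma: the oriented plane with ordered basis (Re sigma, Im sigma); a complex class
sigma in Gamma_C is given by the pair (Re sigma, Im sigma).\<close>
definition P_sigma :: "'v \<times> 'v \<Rightarrow> 'v \<times> 'v" where
  "P_sigma \<sigma> = (fst \<sigma>, snd \<sigma>)"

definition gamma :: "('v::real_vector \<Rightarrow> 'v \<Rightarrow> real) \<Rightarrow> 'v \<times> 'v \<Rightarrow> 'v \<Rightarrow> 'v \<Rightarrow>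
    (('v \<times> real \<times> real) \<times> ('v \<times> real \<times> real)) \<times> (('v \<times> real \<times> real) \<times> ('v \<times> real \<times> real))" where
  "gamma b P \<omega> B =
     (((fst P, - b (fst P) B, 0), (snd P, - b (snd P) B, 0)),
      ((B, (b \<omega> \<omega> - b B B) / 2, 1), (\<omega>, - b \<omega> B, 0)))"

text \<open>xi: the real-linear extension of the isometry of Gamma + U which is the identity on
Gamma' = U'^perp and swaps v \<leftrightarrow> w, v* \<leftrightarrow> w*.  For x in Gamma_R one has
x = x' + <x,v*> v + <x,v> v* with x' in Gamma'_R, since (v,v*) is a hyperbolic basis.\<close>
definition xi :: "('v::real_vector \<Rightarrow> 'v \<Rightarrow> real) \<Rightarrow> 'v \<Rightarrow> 'v \<Rightarrow> 'v \<times> real \<times> real \<Rightarrow> 'v \<times> real \<times> real" where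
  "xi b v vs y = (case y of (x, s, t) \<Rightarrow>
     (x - b x vs *\<^sub>R v - b x v *\<^sub>R vs + s *\<^sub>R v + t *\<^sub>R vs, b x vs, b x v))"

definition iota :: "'a \<times> 'a \<Rightarrow> 'a \<times> 'a" where
  "iota H = (snd H, fst H)"

definition xi_tilde where
  "xi_tilde b v vs H = iota ((xi b v vs (fst (fst H)), xi b v vs (snd (fst H))),
                             (xi b v vs (fst (snd H)), xi b v vs (snd (snd H))))"

end

theory Submission
  imports Defs
begin

text \<open>The classes v = f and v* = f + \<sigma>0 form a hyperbolic
pair, so xi fixes \<omega>I and \<omega>K (which are orthogonal to both), turns the w, w* part of the second
plane of gamma into (<\<omega>I, \<omega>I> / 2) v + v*, and sends \<omega>J to Z + <\<omega>J, v*> w + <\<omega>J, v> w*, where Z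
is the projection of \<omega>J to \<Gamma>'.  Take the B-field Z / vol(f): it is orthogonal to all other classes
involved, and since <Z, Z> = <\<omega>J, \<omega>J> - 2 <\<omega>J, v> <\<omega>J, v*>, every basis vector on the right-hand
side is 1 / vol(f) times the corresponding one on the left.  A positive rescaling of a basis does
not change the oriented plane.\<close>

lemma gamma_orthogonal_B:
  assumes "b (fst P) B = 0" "b (snd P) B = 0" "b \<omega> B = 0"
  shows "gamma b P \<omega> B =
    (((fst P, 0, 0), (snd P, 0, 0)), ((B, (b \<omega> \<omega> - b B B) / 2, 1), (\<omega>, 0, 0)))"
  using assms unfolding gamma_def by simp

lemma independent_by_functional:
  fixes \<phi> :: "'a::real_vector \<Rightarrow> real"
  assumes "linear \<phi>" "\<phi> x \<noteq> 0" "\<phi> y = 0" "y \<noteq> 0"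
  shows "\<forall>s t. s *\<^sub>R x + t *\<^sub>R y = 0 \<longrightarrow> s = 0 \<and> t = 0"
proof (intro allI impI)
  fix s t
  assume comb: "s *\<^sub>R x + t *\<^sub>R y = 0"
  have "s * \<phi> x = \<phi> (s *\<^sub>R x + t *\<^sub>R y)"
    using assms(1,3) by (simp add: linear_add linear_scale)
  also have "\<dots> = 0"
    using assms(1) comb by (simp add: linear_0)
  finally have "s * \<phi> x = 0" .
  with assms(2) have "s = 0" by simp
  with comb assms(4) show "s = 0 \<and> t = 0" by simp
qed

lemma oplane_eq_scaleR:
  assumes "\<forall>s t. s *\<^sub>R x + t *\<^sub>R y = 0 \<longrightarrow> s = 0 \<and> t = 0" "c \<noteq> 0"
  shows "oplane_eq (x, y) (c *\<^sub>R x, c *\<^sub>R y)"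
  unfolding oplane_eq_def
proof (intro conjI exI)
  show "c * c - 0 * 0 > 0"
    using assms(2) by (simp flip: not_real_square_gt_zero)
qed (use assms(1) in simp_all)

lemma opair_eq_scaleR:
  assumes "\<forall>s t. s *\<^sub>R x1 + t *\<^sub>R y1 = 0 \<longrightarrow> s = 0 \<and> t = 0"
    and "\<forall>s t. s *\<^sub>R x2 + t *\<^sub>R y2 = 0 \<longrightarrow> s = 0 \<and> t = 0"
    and "c \<noteq> 0"
  shows "opair_eq ((x1, y1), (x2, y2)) ((c *\<^sub>R x1, c *\<^sub>R y1), (c *\<^sub>R x2, c *\<^sub>R y2))"
  using assms by (simp add: opair_eq_def oplane_eq_scaleR)

locale sym_bilinear_form =
  fixes b :: "'v::real_vector \<Rightarrow> 'v \<Rightarrow> real"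
  assumes sym_bilinear: "sym_bilinear b"
begin

lemma commute: "b x y = b y x"
  using sym_bilinear unfolding sym_bilinear_def by blast

lemma linear_left: "linear (\<lambda>x. b x y)"
  using sym_bilinear unfolding sym_bilinear_def by blast

lemma add_left [simp]: "b (x + y) z = b x z + b y z"
  using linear_add[OF linear_left] by simp

lemma diff_left [simp]: "b (x - y) z = b x z - b y z"
  using linear_diff[OF linear_left] by simp

lemma scaleR_left [simp]: "b (r *\<^sub>R x) z = r * b x z"
  using linear_scale[OF linear_left] by simp

lemma zero_left [simp]: "b 0 z = 0"
  using linear_0[OF linear_left] by simp

lemma add_right [simp]: "b z (x + y) = b z x + b z y"
  by (simp add: commute[of z])

lemma diff_right [simp]: "b z (x - y) = b z x - b z y"
  by (simp add: commute[of z])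

lemma scaleR_right [simp]: "b z (r *\<^sub>R x) = r * b z x"
  by (simp add: commute[of z])

lemma zero_right [simp]: "b z 0 = 0"
  by (simp add: commute[of z])

lemma gamma_scaleR_orthogonal:
  assumes "b x B = 0" "b y B = 0" "b \<omega> B = 0" "c \<noteq> 0"
  shows "gamma b (c *\<^sub>R x, c *\<^sub>R y) (c *\<^sub>R \<omega>) (c *\<^sub>R B) =
    ((c *\<^sub>R (x, 0, 0), c *\<^sub>R (y, 0, 0)),
     (c *\<^sub>R (B, c * (b \<omega> \<omega> - b B B) / 2, 1 / c), c *\<^sub>R (\<omega>, 0, 0)))"
  using assms by (simp add: gamma_orthogonal_B algebra_simps)

end

locale hyperbolic_pair = sym_bilinear_form +
  fixes v vs :: "'v::real_vector"
  assumes isotropic_v: "b v v = 0" and isotropic_vs: "b vs vs = 0" and pairing: "b v vs = 1"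
begin

definition perp :: "'v \<Rightarrow> 'v" where
  "perp x = x - b x vs *\<^sub>R v - b x v *\<^sub>R vs"

lemma pairing': "b vs v = 1"
  using pairing commute by simp

lemma perp_orthogonal: "b (perp x) v = 0" "b (perp x) vs = 0"
  unfolding perp_def by (simp_all add: isotropic_v isotropic_vs pairing pairing')

lemma perp_inner_orthogonal:
  assumes "b y v = 0" "b y vs = 0"
  shows "b (perp x) y = b x y"
  using assms commute[of v y] commute[of vs y] unfolding perp_def by simp

lemma perp_inner_perp: "b (perp x) (perp x) = b x x - 2 * b x v * b x vs"
  unfolding perp_def
  by (simp add: isotropic_v isotropic_vs pairing pairing' commute[of v x] commute[of vs x] algebra_simps)

lemma perp_fixes_orthogonal:
  assumes "b x v = 0" "b x vs = 0"
  shows "perp x = x"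
  using assms by (simp add: perp_def)

lemma xi_eq: "xi b v vs (x, s, t) = (perp x + s *\<^sub>R v + t *\<^sub>R vs, b x vs, b x v)"
  unfolding xi_def perp_def by simp

lemma xi_tilde_gamma_zero:
  assumes "b y v = 0" "b y vs = 0" "b \<omega> v = 0" "b \<omega> vs = 0"
  shows "xi_tilde b v vs (gamma b (x, y) \<omega> 0) =
    ((((b \<omega> \<omega> / 2) *\<^sub>R v + vs, 0, 0), (\<omega>, 0, 0)), ((perp x, b x vs, b x v), (y, 0, 0)))"
  using assms
  by (simp add: xi_tilde_def iota_def gamma_orthogonal_B xi_eq perp_fixes_orthogonal)

lemma mirror_of_zero_B_field:
  assumes y_U': "b y v = 0" "b y vs = 0" and \<omega>_U': "b \<omega> v = 0" "b \<omega> vs = 0"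
    and orthogonal: "b x y = 0" "b x \<omega> = 0" and same_norm: "b y y = b x x"
    and nonzero: "y \<noteq> 0" "\<omega> \<noteq> 0" "b x v \<noteq> 0"
  shows "\<exists>B. opair_eq (xi_tilde b v vs (gamma b (x, y) \<omega> 0))
    (gamma b ((1 / b x v) *\<^sub>R ((b \<omega> \<omega> / 2) *\<^sub>R v + vs), (1 / b x v) *\<^sub>R \<omega>) ((1 / b x v) *\<^sub>R y) B)"
proof -
  define a where "a = b x v"
  define Y where "Y = (b \<omega> \<omega> / 2) *\<^sub>R v + vs"
  define Z where "Z = perp x"
  have a_nonzero: "a \<noteq> 0" and inverse_a_nonzero: "1 / a \<noteq> 0"
    using nonzero(3) a_def by simp_all
  have Z_orthogonal: "b Y Z = 0" "b \<omega> Z = 0" "b y Z = 0"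
    using perp_orthogonal[of x] perp_inner_orthogonal[OF y_U'] perp_inner_orthogonal[OF \<omega>_U']
      orthogonal
    by (simp_all add: Y_def Z_def commute[of _ "perp x"] commute[of x])
  have B_coordinate: "(1 / a) * (b y y - b Z Z) / 2 = b x vs"
    using a_nonzero by (simp add: a_def Z_def perp_inner_perp same_norm)
  have lhs: "xi_tilde b v vs (gamma b (x, y) \<omega> 0) =
      (((Y, 0, 0), (\<omega>, 0, 0)), ((Z, b x vs, a), (y, 0, 0)))"
    using y_U' \<omega>_U' by (simp add: xi_tilde_gamma_zero Y_def Z_def a_def)
  have rhs: "gamma b ((1 / a) *\<^sub>R Y, (1 / a) *\<^sub>R \<omega>) ((1 / a) *\<^sub>R y) ((1 / a) *\<^sub>R Z) =
      (((1 / a) *\<^sub>R (Y, 0, 0), (1 / a) *\<^sub>R (\<omega>, 0, 0)),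
       ((1 / a) *\<^sub>R (Z, b x vs, a), (1 / a) *\<^sub>R (y, 0, 0)))"
    using a_nonzero
    unfolding gamma_scaleR_orthogonal[OF Z_orthogonal inverse_a_nonzero] B_coordinate by simp
  have indep_H1: "\<forall>s t. s *\<^sub>R (Y, 0::real, 0::real) + t *\<^sub>R (\<omega>, 0, 0) = 0 \<longrightarrow> s = 0 \<and> t = 0"
  proof (rule independent_by_functional)
    show "linear (\<lambda>p. b (fst p) v)"
      using linear_compose[OF linear_fst linear_left] by (simp add: o_def)
  qed (use \<omega>_U' nonzero in \<open>simp_all add: Y_def isotropic_v pairing' zero_prod_def\<close>)
  have indep_H2: "\<forall>s t. s *\<^sub>R (Z, b x vs, a) + t *\<^sub>R (y, 0::real, 0::real) = 0 \<longrightarrow> s = 0 \<and> t = 0"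
  proof (rule independent_by_functional)
    show "linear (\<lambda>p. snd (snd p))"
      using linear_compose[OF linear_snd linear_snd] by (simp add: o_def)
  qed (use nonzero(1) a_nonzero in \<open>simp_all add: zero_prod_def\<close>)
  have "opair_eq (xi_tilde b v vs (gamma b (x, y) \<omega> 0))
      (gamma b ((1 / a) *\<^sub>R Y, (1 / a) *\<^sub>R \<omega>) ((1 / a) *\<^sub>R y) ((1 / a) *\<^sub>R Z))"
    unfolding lhs rhs by (rule opair_eq_scaleR[OF indep_H1 indep_H2 inverse_a_nonzero])
  then show ?thesis
    unfolding a_def Y_def by blast
qed

end

lemma hyperbolic_pair_fibre_section:
  assumes "sym_bilinear b" "b f f = 0" "b f \<sigma>0 = 1" "b \<sigma>0 \<sigma>0 = -2"
  shows "hyperbolic_pair b f (f + \<sigma>0)"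
proof -
  interpret sym_bilinear_form b
    by (rule sym_bilinear_form.intro) (fact assms(1))
  show ?thesis
    by unfold_locales (simp_all add: assms commute[of \<sigma>0 f])
qed

theorem mainTheorem19:
  fixes b :: "'v::real_vector \<Rightarrow> 'v \<Rightarrow> real"
    and \<omega>I \<omega>J \<omega>K f \<sigma>0 :: 'v
  assumes form: "sym_bilinear b"
    and hk_pos: "b \<omega>I \<omega>I > 0"
    and hk_J: "b \<omega>J \<omega>J = b \<omega>I \<omega>I" and hk_K: "b \<omega>K \<omega>K = b \<omega>I \<omega>I"
    and hk_IJ: "b \<omega>I \<omega>J = 0" and hk_JK: "b \<omega>J \<omega>K = 0" and hk_IK: "b \<omega>I \<omega>K = 0"
    and ff: "b f f = 0" and fs: "b f \<sigma>0 = 1" and ss: "b \<sigma>0 \<sigma>0 = -2"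
    and f11: "b f \<omega>K = 0" "b f \<omega>I = 0"
    and s11: "b \<sigma>0 \<omega>K = 0" "b \<sigma>0 \<omega>I = 0"
    and volpos: "b \<omega>J f > 0"
  shows
    "let vol = b \<omega>J f;
         \<sigma>I = (\<omega>J, \<omega>K);
         \<sigma>v = ((1 / vol) *\<^sub>R ((b \<omega>I \<omega>I / 2) *\<^sub>R f + \<sigma>0 + f), (1 / vol) *\<^sub>R \<omega>I);
         \<omega>v = (1 / vol) *\<^sub>R snd \<sigma>I
     in \<exists>Bv :: 'v. opair_eq (xi_tilde b f (f + \<sigma>0) (gamma b (P_sigma \<sigma>I) \<omega>I 0))
                             (gamma b (P_sigma \<sigma>v) \<omega>v Bv)"
proof -
  interpret hyperbolic_pair b f "f + \<sigma>0"
    using hyperbolic_pair_fibre_section form ff fs ss .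
  have "\<exists>B. opair_eq (xi_tilde b f (f + \<sigma>0) (gamma b (\<omega>J, \<omega>K) \<omega>I 0))
    (gamma b ((1 / b \<omega>J f) *\<^sub>R ((b \<omega>I \<omega>I / 2) *\<^sub>R f + (f + \<sigma>0)), (1 / b \<omega>J f) *\<^sub>R \<omega>I)
      ((1 / b \<omega>J f) *\<^sub>R \<omega>K) B)"
  proof (rule mirror_of_zero_B_field)
    show "\<omega>K \<noteq> 0" "\<omega>I \<noteq> 0"
      using hk_pos hk_K by auto
  qed (use f11 s11 hk_IJ hk_JK hk_J hk_K volpos in
        \<open>simp_all add: commute[of \<omega>K f] commute[of \<omega>I f] commute[of \<omega>K \<sigma>0] commute[of \<omega>I \<sigma>0]
          commute[of \<omega>J \<omega>I]\<close>)
  then show ?thesis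
    by (simp add: Let_def P_sigma_def add.assoc add.commute[of \<sigma>0 f])
qed

end
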